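(* Let $L$ be a simple $3$-connected planar graph with at least four vertices, with a fixed planar embedding, and let $r_0,r_1$ be vertices on the outer face of $L$ such that $(r_0,r_1)$ is an edge of $L$. Let $L'=L-(r_0,r_1)$ (delete the edge, keep the vertices) and let $C$ be the boundary of the outer face of $L'$, which is a simple cycle. Then every non-trivial bridge of $C$ in $L'$ has at least three vertices of attachment.
   Context: For a subgraph $H$ of a graph $G$, a vertex of attachment of $H$ is a vertex of $H$ incident with some edge of $G$ not belonging to $H$. For a cycle $J$ of $G$, a bridge of $J$ in $G$ is a subgraph $B$ of $G$ such that (1) every vertex of attachment of $B$ is a vertex of $J$, (2) $B$ is not a subgraph of $J$, and (3) no proper subgraph of $B$ has both properties (1) and (2). A bridge consisting of a single chord of $J$ is called trivial; all other bridges are non-trivial. *)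

theory Defs
  imports "HOL-Analysis.Analysis"
begin

definition simple_graph :: "'a set \<Rightarrow> 'a set set \<Rightarrow> bool" where
  "simple_graph V E \<longleftrightarrow> finite V \<and>
     (\<forall>e\<in>E. \<exists>u v. e = {u, v} \<and> u \<noteq> v \<and> u \<in> V \<and> v \<in> V)"

definition connected_graph :: "'a set \<Rightarrow> 'a set set \<Rightarrow> bool" where
  "connected_graph V E \<longleftrightarrow>
     (\<forall>u\<in>V. \<forall>v\<in>V. (\<lambda>x y. x \<in> V \<and> y \<in> V \<and> {x, y} \<in> E)\<^sup>*\<^sup>* u v)"

definition k_connected :: "nat \<Rightarrow> 'a set \<Rightarrow> 'a set set \<Rightarrow> bool" where
  "k_connected k V E \<longleftrightarrow> card V > k \<and>
     (\<forall>S\<subseteq>V. card S < k \<longrightarrow> connected_graph (V - S) {e\<in>E. e \<subseteq> V - S})"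

definition plane_embedding ::
  "'a set \<Rightarrow> 'a set set \<Rightarrow> ('a \<Rightarrow> complex) \<Rightarrow> ('a set \<Rightarrow> real \<Rightarrow> complex) \<Rightarrow> bool" where
  "plane_embedding V E pos \<gamma> \<longleftrightarrow> inj_on pos V \<and>
     (\<forall>e\<in>E. arc (\<gamma> e) \<and> {pathstart (\<gamma> e), pathfinish (\<gamma> e)} = pos ` e \<and>
             path_image (\<gamma> e) \<inter> pos ` V = pos ` e) \<and>
     (\<forall>e\<in>E. \<forall>e'\<in>E. e \<noteq> e' \<longrightarrow>
             path_image (\<gamma> e) \<inter> path_image (\<gamma> e') \<subseteq> pos ` (e \<inter> e'))"

definition drawing ::
  "'a set \<Rightarrow> 'a set set \<Rightarrow> ('a \<Rightarrow> complex) \<Rightarrow> ('a set \<Rightarrow> real \<Rightarrow> complex) \<Rightarrow> complex set" where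
  "drawing V E pos \<gamma> = pos ` V \<union> (\<Union>e\<in>E. path_image (\<gamma> e))"

definition outer_face :: "complex set \<Rightarrow> complex set" where
  "outer_face S = {x. x \<notin> S \<and> \<not> bounded (connected_component_set (- S) x)}"

definition face_boundary_vertices :: "'a set \<Rightarrow> ('a \<Rightarrow> complex) \<Rightarrow> complex set \<Rightarrow> 'a set" where
  "face_boundary_vertices V pos F = {v\<in>V. pos v \<in> frontier F}"

definition face_boundary_edges ::
  "'a set set \<Rightarrow> ('a set \<Rightarrow> real \<Rightarrow> complex) \<Rightarrow> complex set \<Rightarrow> 'a set set" where
  "face_boundary_edges E \<gamma> F = {e\<in>E. path_image (\<gamma> e) \<subseteq> frontier F}"

definition is_subgraph :: "'a set \<Rightarrow> 'a set set \<Rightarrow> 'a set \<Rightarrow> 'a set set \<Rightarrow> bool" where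
  "is_subgraph VH EH V E \<longleftrightarrow> VH \<subseteq> V \<and> EH \<subseteq> E \<and> (\<forall>e\<in>EH. e \<subseteq> VH)"

definition attachments :: "'a set \<Rightarrow> 'a set set \<Rightarrow> 'a set \<Rightarrow> 'a set set \<Rightarrow> 'a set" where
  "attachments V E VH EH = {v\<in>VH. \<exists>e\<in>E. e \<notin> EH \<and> v \<in> e}"

definition bridge_cond :: "'a set \<Rightarrow> 'a set set \<Rightarrow> 'a set \<Rightarrow> 'a set set \<Rightarrow> 'a set \<Rightarrow> 'a set set \<Rightarrow> bool" where
  "bridge_cond V E VJ EJ VB EB \<longleftrightarrow>
     attachments V E VB EB \<subseteq> VJ \<and> \<not> (VB \<subseteq> VJ \<and> EB \<subseteq> EJ)"

definition is_bridge :: "'a set \<Rightarrow> 'a set set \<Rightarrow> 'a set \<Rightarrow> 'a set set \<Rightarrow> 'a set \<Rightarrow> 'a set set \<Rightarrow> bool" where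
  "is_bridge V E VJ EJ VB EB \<longleftrightarrow> is_subgraph VB EB V E \<and> bridge_cond V E VJ EJ VB EB \<and>
     \<not> (\<exists>VB' EB'. is_subgraph VB' EB' VB EB \<and> (VB', EB') \<noteq> (VB, EB) \<and>
                 bridge_cond V E VJ EJ VB' EB')"

definition trivial_bridge :: "'a set \<Rightarrow> 'a set set \<Rightarrow> 'a set \<Rightarrow> 'a set set \<Rightarrow> bool" where
  "trivial_bridge VJ EJ VB EB \<longleftrightarrow> (\<exists>e. EB = {e} \<and> VB = e \<and> e \<notin> EJ \<and> e \<subseteq> VJ)"

end

theory Submission
  imports Defs
begin

text \<open>
  Suppose a non-trivial bridge B of C had fewer than three attachments. Since r0 and r1 stay on
  the outer face of L', each lies on an edge of C, and edges of C are not in B; so r0, r1 and the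
  other end x of the C-edge at r0 are attachments as soon as they lie in B. By 3-connectivity, L
  stays connected when the attachments are deleted, and a walk avoiding them from a vertex of B
  off C never leaves B: an edge outside B at a vertex of B makes that vertex an attachment, also
  when it is the deleted edge r0 r1. Hence B contains every vertex of L, in particular r0, r1
  and x, which gives three attachments.

  The topological input is that a vertex on the frontier of the outer face lies on an edge
  contained in that frontier. Near the vertex the frontier meets an incident edge in an interior
  point, and by Janiszewski's theorem an arc that meets the rest of the drawing only at its ends
  cannot leave the closure of a complementary region after touching it at an interior point.
\<close>

section \<open>Arcs and complementary regions in the plane\<close>

lemma arc_pieces_local_component:
  fixes g :: "real \<Rightarrow> complex"
  assumes arc: "arc g" and clK: "closed K"
    and KP: "K \<inter> path_image g \<subseteq> {pathstart g, pathfinish g}"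
    and ab: "0 < a" "a < b" "b \<le> 1"
  obtains r where "r > 0"
    "\<And>p q. p \<in> ball (g a) r \<Longrightarrow> q \<in> ball (g a) r \<Longrightarrow> p \<notin> g ` {0..a} \<Longrightarrow> q \<notin> g ` {0..a} \<Longrightarrow>
       connected_component (- (g ` {0..a} \<union> (K \<union> g ` {b..1}))) p q"
proof -
  define S where "S = g ` {0..a}"
  define T where "T = K \<union> g ` {b..1}"
  have inj: "inj_on g {0..1}" and cont: "continuous_on {0..1} g"
    using arc by (auto simp: arc_def path_def)
  have only_start: "u = 0" if u: "u \<in> {0..<b}" "g u \<in> T" for u
  proof -
    have u01: "u \<in> {0..1}" using u ab by auto
    show ?thesis
    proof (cases "g u \<in> K")
      case True
      then have "g u = g 0 \<or> g u = g 1"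
        using KP u01 by (auto simp: path_image_def pathstart_def pathfinish_def)
      moreover have "g u \<noteq> g 1"
        using inj_onD[OF inj, of u 1] u01 u ab by auto
      ultimately show ?thesis
        using inj_onD[OF inj, of u 0] u01 by auto
    next
      case False
      then obtain v where v: "v \<in> {b..1}" "g u = g v" using u by (auto simp: T_def)
      have "u = v" by (rule inj_onD[OF inj v(2) u01]) (use v ab in auto)
      then show ?thesis using u v by auto
    qed
  qed
  have "compact S" unfolding S_def
    by (intro compact_continuous_image continuous_on_subset[OF cont]) (use ab in auto)
  moreover have "closed T" unfolding T_def
    by (intro closed_Un clK compact_imp_closed compact_continuous_image continuous_on_subset[OF cont])
       (use ab in auto)
  moreover have "S \<inter> T \<subseteq> {g 0}"
    using only_start ab by (force simp: S_def)
  then have "connected (S \<inter> T)"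
    by (metis connected_empty connected_sing subset_singletonD)
  moreover have "connected (- S)"
  proof -
    have "arc (subpath 0 a g)" using arc_subpath_arc[OF arc] ab by auto
    moreover have "path_image (subpath 0 a g) = S" using ab by (simp add: path_image_subpath S_def)
    ultimately show ?thesis by (metis connected_arc_complement DIM_complex order_refl)
  qed
  moreover have "g a \<notin> T" using only_start[of a] ab by auto
  then obtain r where r: "r > 0" "ball (g a) r \<subseteq> - T"
    using \<open>closed T\<close> open_contains_ball[of "- T"] by (auto simp: open_Compl)
  moreover have "connected_component (- T) p q" if "p \<in> ball (g a) r" "q \<in> ball (g a) r" for p q
    unfolding connected_component_def using r that by (intro exI[of _ "ball (g a) r"]) auto
  moreover have "connected_component (- S) p q" if "p \<notin> S" "q \<notin> S" for p q
    using \<open>connected (- S)\<close> that by (auto simp: connected_component_def)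
  ultimately show ?thesis
    using that[of r] Janiszewski[of S T] by (simp add: S_def T_def)
qed

lemma arc_closure_continues:
  fixes g :: "real \<Rightarrow> complex"
  assumes arc: "arc g" and clK: "closed K"
    and KP: "K \<inter> path_image g \<subseteq> {pathstart g, pathfinish g}"
    and frU: "frontier U \<subseteq> K \<union> path_image g"
    and disU: "U \<inter> (K \<union> path_image g) = {}"
    and a: "0 < a" "a < s" "s \<le> 1" "g a \<in> closure U"
  shows "\<exists>t\<in>{a<..s}. g t \<in> closure U"
proof (rule ccontr)
  \<comment> \<open>Otherwise a point of U near g a and a point g t just after a are joined off K and the
    arc pieces g[0,a], g[s,1]; the joining set must cross frontier U, hence meet g(a,s).\<close>
  assume "\<not> ?thesis"
  then have gap: "g t \<notin> closure U" if "a < t" "t \<le> s" for t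
    using that by auto
  obtain r where r: "r > 0" and comp:
    "\<And>p q. p \<in> ball (g a) r \<Longrightarrow> q \<in> ball (g a) r \<Longrightarrow> p \<notin> g ` {0..a} \<Longrightarrow> q \<notin> g ` {0..a} \<Longrightarrow>
       connected_component (- (g ` {0..a} \<union> (K \<union> g ` {s..1}))) p q"
    using arc_pieces_local_component[OF arc clK KP a(1-3)] by blast
  obtain p where p: "p \<in> U" "dist p (g a) < r"
    using a(4) r unfolding closure_approachable by blast
  have "continuous (at a within {0..1}) g"
    using arc a by (simp add: arc_def path_def continuous_on_eq_continuous_within)
  then obtain d where d: "d > 0" "\<forall>t\<in>{0..1}. dist t a < d \<longrightarrow> dist (g t) (g a) < r"
    using r unfolding continuous_within_eps_delta by blast
  define t where "t = min (a + d/2) s"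
  have t: "a < t" "t \<le> s" using d a by (auto simp: t_def)
  moreover have "dist t a < d" using d t by (auto simp: t_def dist_real_def)
  ultimately have t: "a < t" "t \<le> s" "dist (g t) (g a) < r" using d a by auto
  have inj: "inj_on g {0..1}" using arc by (simp add: arc_def)
  have "g t \<notin> g ` {0..a}"
  proof
    assume "g t \<in> g ` {0..a}"
    then obtain u where "u \<in> {0..a}" "g t = g u" by auto
    moreover then have "t = u" by (intro inj_onD[OF inj]) (use t a in auto)
    ultimately show False using t by auto
  qed
  moreover have "p \<notin> g ` {0..a}" using p disU a by (auto simp: path_image_def)
  ultimately have "connected_component (- (g ` {0..a} \<union> (K \<union> g ` {s..1}))) p (g t)"
    using comp p t by (simp add: dist_commute)
  then obtain C where C: "connected C" "C \<subseteq> - (g ` {0..a} \<union> (K \<union> g ` {s..1}))"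
    "p \<in> C" "g t \<in> C"
    unfolding connected_component_def by blast
  have "g t \<in> path_image g" using t a by (auto simp: path_image_def)
  then have "g t \<notin> U" using disU by blast
  then obtain z where z: "z \<in> C" "z \<in> frontier U"
    using connected_Int_frontier[OF C(1)] C(3,4) p(1) by blast
  then have "z \<notin> K" "z \<notin> g ` {0..a}" "z \<notin> g ` {s..1}" using C(2) by auto
  moreover obtain v where v: "v \<in> {0..1}" "z = g v"
    using frU z(2) \<open>z \<notin> K\<close> by (auto simp: path_image_def)
  ultimately have "a < v" "v < s" by (auto simp: not_less)
  then have "z \<notin> closure U" using gap v by auto
  then show False using z by (simp add: frontier_def)
qed

lemma arc_closure_from_interior_point:
  fixes g :: "real \<Rightarrow> complex"
  assumes arc: "arc g" and clK: "closed K"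
    and KP: "K \<inter> path_image g \<subseteq> {pathstart g, pathfinish g}"
    and frU: "frontier U \<subseteq> K \<union> path_image g"
    and disU: "U \<inter> (K \<union> path_image g) = {}"
    and c: "0 < c" "c < 1" "g c \<in> closure U"
    and s: "c \<le> s" "s \<le> 1"
  shows "g s \<in> closure U"
proof -
  define Z where "Z = {c..s} \<inter> g -` closure U"
  have "closed Z" unfolding Z_def
    using arc s c
    by (intro continuous_closed_preimage closed_closure)
       (auto simp: arc_def path_def intro: continuous_on_subset)
  then have "compact Z" by (simp add: Z_def compact_eq_bounded_closed bounded_Int)
  moreover have "c \<in> Z" using c s by (auto simp: Z_def)
  ultimately obtain a where a: "a \<in> Z" and a_max: "\<forall>t\<in>Z. t \<le> a"
    using compact_attains_sup by blast
  have "a = s"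
  proof (rule ccontr)
    assume "a \<noteq> s"
    then have "0 < a" "a < s" "g a \<in> closure U" using a c by (auto simp: Z_def)
    then obtain t where t: "t \<in> {a<..s}" "g t \<in> closure U"
      using arc_closure_continues[OF arc clK KP frU disU] s by blast
    then have "t \<in> Z" using a by (auto simp: Z_def)
    then show False using a_max t(1) by fastforce
  qed
  then show ?thesis using a by (simp add: Z_def)
qed

lemma arc_subset_closure:
  fixes g :: "real \<Rightarrow> complex"
  assumes arc: "arc g" and clK: "closed K"
    and KP: "K \<inter> path_image g \<subseteq> {pathstart g, pathfinish g}"
    and frU: "frontier U \<subseteq> K \<union> path_image g"
    and disU: "U \<inter> (K \<union> path_image g) = {}"
    and c: "0 < c" "c < 1" "g c \<in> closure U"
  shows "path_image g \<subseteq> closure U"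
proof
  fix x assume "x \<in> path_image g"
  then obtain s where s: "s \<in> {0..1}" "x = g s" by (auto simp: path_image_def)
  show "x \<in> closure U"
  proof (cases "c \<le> s")
    case True
    then show ?thesis using arc_closure_from_interior_point[OF assms] s by auto
  next
    case False
    have "reversepath g (1 - c) \<in> closure U" using c by (simp add: reversepath_def)
    then have "reversepath g (1 - s) \<in> closure U"
      using arc_closure_from_interior_point[of "reversepath g" K U "1 - c" "1 - s"]
        arc KP frU disU clK c False s by (auto simp: arc_reversepath)
    then show ?thesis using s by (simp add: reversepath_def)
  qed
qed

lemma frontier_point_near:
  fixes x y :: "'a::euclidean_space"
  assumes dim: "2 \<le> DIM('a)" and x: "x \<in> frontier U"
    and P: "connected P" "P \<inter> U = {}" "x \<in> P" "y \<in> P"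
    and \<epsilon>: "0 < \<epsilon>" "\<epsilon> \<le> dist x y"
  shows "\<exists>z\<in>frontier U. 0 < dist x z \<and> dist x z < \<epsilon>"
proof -
  have "x \<in> closure U" using x by (simp add: frontier_def)
  then obtain q where q: "q \<in> U" "dist q x < \<epsilon>"
    using \<epsilon>(1) unfolding closure_approachable by blast
  define \<rho> where "\<rho> = dist x q"
  have "q \<noteq> x" using q P by auto
  then have \<rho>: "0 < \<rho>" "\<rho> < \<epsilon>" using q by (auto simp: \<rho>_def dist_commute)
  have "P \<inter> frontier (cball x \<rho>) \<noteq> {}"
    using P \<rho> \<epsilon> by (intro connected_Int_frontier) auto
  then obtain w where w: "w \<in> P" "w \<in> sphere x \<rho>" unfolding frontier_cball by blast
  have "sphere x \<rho> \<inter> frontier U \<noteq> {}"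
  proof (rule connected_Int_frontier)
    show "connected (sphere x \<rho>)" using dim by (simp add: connected_sphere)
    show "sphere x \<rho> \<inter> U \<noteq> {}" using q by (auto simp: \<rho>_def)
    show "sphere x \<rho> - U \<noteq> {}" using w P by auto
  qed
  then obtain z where "z \<in> frontier U" "z \<in> sphere x \<rho>" by blast
  then show ?thesis using \<rho> by auto
qed

lemma outer_face_open:
  assumes "closed D" shows "open (outer_face D)"
proof (subst open_subopen, intro ballI)
  fix x assume x: "x \<in> outer_face D"
  let ?C = "connected_component_set (- D) x"
  have "?C \<subseteq> outer_face D"
  proof
    fix y assume y: "y \<in> ?C"
    then have "connected_component_set (- D) y = ?C" by (rule connected_component_eq)
    moreover have "y \<notin> D" using y connected_component_in by blast
    ultimately show "y \<in> outer_face D" using x by (simp add: outer_face_def)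
  qed
  moreover have "open ?C" using assms by (simp add: open_Compl open_connected_component)
  moreover have "x \<in> ?C" using x by (simp add: outer_face_def)
  ultimately show "\<exists>T. open T \<and> x \<in> T \<and> T \<subseteq> outer_face D" by blast
qed

lemma outer_face_disjoint: "outer_face D \<inter> D = {}"
  by (auto simp: outer_face_def)

lemma frontier_outer_face_subset:
  assumes "closed D" shows "frontier (outer_face D) \<subseteq> D"
proof
  fix x assume x: "x \<in> frontier (outer_face D)"
  show "x \<in> D"
  proof (rule ccontr)
    assume "x \<notin> D"
    let ?C = "connected_component_set (- D) x"
    have "open ?C" using assms by (simp add: open_Compl open_connected_component)
    moreover have "x \<in> ?C" using \<open>x \<notin> D\<close> by simp
    ultimately obtain r where r: "r > 0" "ball x r \<subseteq> ?C" using open_contains_ball by blast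
    have "x \<in> closure (outer_face D)" using x by (simp add: frontier_def)
    then obtain y where y: "y \<in> outer_face D" "dist y x < r"
      using r(1) unfolding closure_approachable by blast
    then have "y \<in> ?C" using r by (auto simp: dist_commute)
    then have "connected_component_set (- D) y = ?C" by (rule connected_component_eq)
    then have "x \<in> outer_face D" using y \<open>x \<notin> D\<close> by (simp add: outer_face_def)
    then show False using x outer_face_open[OF assms] by (simp add: frontier_def interior_open)
  qed
qed

lemma outer_face_antimono:
  assumes "D' \<subseteq> D" shows "outer_face D \<subseteq> outer_face D'"
proof
  fix x assume x: "x \<in> outer_face D"
  have "connected_component_set (- D) x \<subseteq> connected_component_set (- D') x"
    using assms by (intro connected_component_mono) auto
  then show "x \<in> outer_face D'" using x assms by (auto simp: outer_face_def dest: bounded_subset)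
qed

lemma frontier_outer_face_antimono:
  assumes "D' \<subseteq> D" "closed D'" "x \<in> D'" "x \<in> frontier (outer_face D)"
  shows "x \<in> frontier (outer_face D')"
proof -
  have "x \<in> closure (outer_face D')"
    using assms(4) closure_mono[OF outer_face_antimono[OF assms(1)]] by (auto simp: frontier_def)
  moreover have "x \<notin> outer_face D'" using assms(3) outer_face_disjoint by blast
  ultimately show ?thesis using outer_face_open[OF assms(2)] by (simp add: frontier_def interior_open)
qed

section \<open>Bridges in k-connected graphs\<close>

lemma simple_graph_edge_subset: "simple_graph V E \<Longrightarrow> e \<in> E \<Longrightarrow> e \<subseteq> V"
  by (fastforce simp: simple_graph_def)

lemma simple_graph_finite_edges:
  assumes "simple_graph V E" shows "finite E"
proof -
  have "E \<subseteq> Pow V" using simple_graph_edge_subset[OF assms] by blast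
  moreover have "finite V" using assms by (simp add: simple_graph_def)
  ultimately show ?thesis by (meson finite_Pow_iff finite_subset)
qed

lemma simple_graph_subset: "simple_graph V E \<Longrightarrow> E' \<subseteq> E \<Longrightarrow> simple_graph V E'"
  by (auto simp: simple_graph_def)

lemma simple_graph_edge_other_end:
  assumes "simple_graph V E" "e \<in> E" "u \<in> e"
  obtains x where "e = {u, x}" "x \<noteq> u"
proof -
  obtain a b where "e = {a, b}" "a \<noteq> b" using assms(1,2) unfolding simple_graph_def by blast
  then show ?thesis using that assms(3) by (auto simp: insert_commute)
qed

lemma k_connected_other_neighbour:
  assumes kc: "k_connected k V E" and k: "2 \<le> k" and ab: "a \<in> V" "b \<in> V" "a \<noteq> b"
  shows "\<exists>y. {a, y} \<in> E \<and> y \<noteq> b"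
proof -
  have "card V > 2" using kc k by (simp add: k_connected_def)
  moreover have "finite V" by (rule card_ge_0_finite) (use calculation in linarith)
  ultimately have "card (V - {a, b}) > 0" using ab by (simp add: card_Diff_subset)
  then obtain v where v: "v \<in> V - {b}" "v \<noteq> a" by (auto simp: card_gt_0_iff)
  have "connected_graph (V - {b}) {e\<in>E. e \<subseteq> V - {b}}" using kc k ab by (simp add: k_connected_def)
  then have "(\<lambda>x y. x \<in> V - {b} \<and> y \<in> V - {b} \<and> {x, y} \<in> {e\<in>E. e \<subseteq> V - {b}})\<^sup>*\<^sup>* a v"
    using ab v unfolding connected_graph_def by blast
  then show ?thesis
    using v(2) by (cases rule: converse_rtranclpE) auto
qed

lemma k_connected_subgraph_few_attachments:
  assumes kc: "k_connected k V E" and sub: "is_subgraph VB EB V E"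
    and few: "card (attachments V E VB EB) < k" and inner: "\<not> VB \<subseteq> attachments V E VB EB"
  shows "V \<subseteq> VB"
proof
  define A where "A = attachments V E VB EB"
  have AVB: "A \<subseteq> VB" and VBV: "VB \<subseteq> V" using sub by (auto simp: A_def attachments_def is_subgraph_def)
  obtain v where v: "v \<in> VB" "v \<notin> A" using inner by (auto simp: A_def)
  fix w assume w: "w \<in> V"
  show "w \<in> VB"
  proof (cases "w \<in> A")
    case False
    have "connected_graph (V - A) {e\<in>E. e \<subseteq> V - A}"
      using kc few AVB VBV by (simp add: k_connected_def A_def)
    then have "(\<lambda>x y. x \<in> V - A \<and> y \<in> V - A \<and> {x, y} \<in> {e\<in>E. e \<subseteq> V - A})\<^sup>*\<^sup>* v w"
      using v w False VBV unfolding connected_graph_def by blast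
    then show ?thesis
    proof (induction rule: rtranclp_induct)
      case base
      then show ?case using v by simp
    next
      case (step y z)
      then have "{y, z} \<in> EB" using sub by (auto simp: A_def attachments_def)
      then show ?case using sub by (auto simp: is_subgraph_def)
    qed
  qed (use AVB in blast)
qed

lemma attachments_remove_edge:
  assumes "f \<inter> VB \<subseteq> attachments V (E - {f}) VB EB"
  shows "attachments V E VB EB = attachments V (E - {f}) VB EB"
  using assms by (auto simp: attachments_def)

lemma bridge_edges_disjoint_cycle:
  assumes br: "is_bridge V E VJ EJ VB EB" and EJ: "\<forall>e\<in>EJ. e \<subseteq> VJ"
  shows "EB \<inter> EJ = {}"
proof (rule ccontr)
  assume "EB \<inter> EJ \<noteq> {}"
  then have "(VB, EB - EJ) \<noteq> (VB, EB)" by auto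
  moreover have "is_subgraph VB (EB - EJ) VB EB"
    using br by (auto simp: is_bridge_def is_subgraph_def)
  moreover have "attachments V E VB (EB - EJ) \<subseteq> VJ"
  proof
    fix v assume "v \<in> attachments V E VB (EB - EJ)"
    then obtain e where e: "v \<in> VB" "e \<in> E" "e \<notin> EB - EJ" "v \<in> e"
      by (auto simp: attachments_def)
    show "v \<in> VJ"
    proof (cases "e \<in> EJ")
      case True
      then show ?thesis using EJ e by blast
    next
      case False
      then have "v \<in> attachments V E VB EB" using e by (auto simp: attachments_def)
      then show ?thesis using br by (auto simp: is_bridge_def bridge_cond_def)
    qed
  qed
  then have "bridge_cond V E VJ EJ VB (EB - EJ)"
    using br by (auto simp: is_bridge_def bridge_cond_def)
  ultimately show False using br unfolding is_bridge_def by blast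
qed

lemma bridge_cycle_vertex_attachment:
  assumes br: "is_bridge V E VJ EJ VB EB" and EJ: "EJ \<subseteq> E" "\<forall>e\<in>EJ. e \<subseteq> VJ"
    and e: "e \<in> EJ" "u \<in> e" and u: "u \<in> VB"
  shows "u \<in> attachments V E VB EB"
  using bridge_edges_disjoint_cycle[OF br EJ(2)] EJ(1) e u by (auto simp: attachments_def)

lemma nontrivial_bridge_inner_vertex:
  assumes br: "is_bridge V E VJ EJ VB EB" and nt: "\<not> trivial_bridge VJ EJ VB EB"
  shows "\<exists>v\<in>VB. v \<notin> VJ"
proof (rule ccontr)
  assume "\<not> ?thesis"
  then have VBJ: "VB \<subseteq> VJ" by blast
  then obtain f where f: "f \<in> EB" "f \<notin> EJ"
    using br by (auto simp: is_bridge_def bridge_cond_def)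
  have fVB: "f \<subseteq> VB" using br f by (auto simp: is_bridge_def is_subgraph_def)
  have "is_subgraph f {f} VB EB" using fVB f by (auto simp: is_subgraph_def)
  moreover have "bridge_cond V E VJ EJ f {f}"
    using fVB VBJ f by (auto simp: bridge_cond_def attachments_def)
  ultimately have "(f, {f}) = (VB, EB)" using br unfolding is_bridge_def by blast
  then show False using nt f fVB VBJ by (auto simp: trivial_bridge_def)
qed

lemma nontrivial_bridge_three_attachments:
  assumes sg: "simple_graph V E" and kc: "k_connected 3 V E" and r: "{r0, r1} \<in> E"
    and br: "is_bridge V (E - {{r0, r1}}) VJ EJ VB EB" and nt: "\<not> trivial_bridge VJ EJ VB EB"
    and EJ: "EJ \<subseteq> E - {{r0, r1}}" "\<forall>e\<in>EJ. e \<subseteq> VJ"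
    and e0: "e0 \<in> EJ" "r0 \<in> e0" and e1: "e1 \<in> EJ" "r1 \<in> e1"
  shows "3 \<le> card (attachments V (E - {{r0, r1}}) VB EB)"
proof (rule ccontr)
  define A where "A = attachments V (E - {{r0, r1}}) VB EB"
  assume "\<not> 3 \<le> card (attachments V (E - {{r0, r1}}) VB EB)"
  then have few: "card A < 3" by (simp add: A_def)
  have cycle_attachment: "u \<in> A" if "e \<in> EJ" "u \<in> e" "u \<in> VB" for e u
    using bridge_cycle_vertex_attachment[OF br EJ] that by (simp add: A_def)
  have "{r0, r1} \<inter> VB \<subseteq> A" using cycle_attachment[OF e0] cycle_attachment[OF e1] by blast
  then have "attachments V E VB EB = A" unfolding A_def by (rule attachments_remove_edge)
  moreover have "is_subgraph VB EB V E" using br by (auto simp: is_bridge_def is_subgraph_def)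
  moreover obtain v where "v \<in> VB" "v \<notin> VJ" using nontrivial_bridge_inner_vertex[OF br nt] by blast
  then have "\<not> VB \<subseteq> A" using br by (auto simp: is_bridge_def bridge_cond_def A_def)
  ultimately have "V \<subseteq> VB" using k_connected_subgraph_few_attachments[OF kc] few by auto
  have e0E: "e0 \<in> E" "e0 \<noteq> {r0, r1}" using e0 EJ(1) by auto
  obtain x where x: "e0 = {r0, x}" "x \<noteq> r0"
    using simple_graph_edge_other_end[OF sg e0E(1) e0(2)] .
  have "r0 \<in> V" "r1 \<in> V" "x \<in> V"
    using simple_graph_edge_subset[OF sg] r e0E(1) x(1) by blast+
  then have "{r0, r1, x} \<subseteq> A"
    using cycle_attachment[OF e0] cycle_attachment[OF e1] cycle_attachment[OF e0(1)] x(1)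
      \<open>V \<subseteq> VB\<close> by blast
  moreover have "r0 \<noteq> r1" using sg r by (auto simp: simple_graph_def doubleton_eq_iff)
  then have "card {r0, r1, x} = 3" using e0E(2) x by auto
  moreover have "A \<subseteq> V"
    using br by (auto simp: A_def attachments_def is_bridge_def is_subgraph_def)
  then have "finite A" using sg by (auto simp: simple_graph_def intro: finite_subset)
  ultimately show False using few card_mono[of A "{r0, r1, x}"] by simp
qed

section \<open>Plane drawings\<close>

lemma plane_embedding_subset:
  "plane_embedding V E pos \<gamma> \<Longrightarrow> E' \<subseteq> E \<Longrightarrow> plane_embedding V E' pos \<gamma>"
  unfolding plane_embedding_def by (meson subsetD)

lemma drawing_closed:
  assumes "finite V" "finite E" "\<And>e. e \<in> E \<Longrightarrow> path (\<gamma> e)"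
  shows "closed (drawing V E pos \<gamma>)"
proof -
  have "closed (pos ` V)" using assms(1) by (simp add: finite_imp_closed)
  moreover have "closed (path_image (\<gamma> e))" if "e \<in> E" for e
    using assms(3)[OF that] by (simp add: closed_path_image)
  ultimately show ?thesis unfolding drawing_def using assms(2) by (intro closed_Un closed_UN) auto
qed

lemma simple_plane_drawing_closed:
  "simple_graph V E \<Longrightarrow> plane_embedding V E pos \<gamma> \<Longrightarrow> closed (drawing V E pos \<gamma>)"
  by (intro drawing_closed simple_graph_finite_edges)
     (auto simp: simple_graph_def plane_embedding_def arc_imp_path)

lemma plane_embedding_endpoints:
  assumes "plane_embedding V E pos \<gamma>" "e \<in> E" "v \<in> e"
  shows "pos v \<in> path_image (\<gamma> e)"
proof -
  have "pos v \<in> {pathstart (\<gamma> e), pathfinish (\<gamma> e)}"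
    using assms by (simp add: plane_embedding_def)
  then show ?thesis by auto
qed

lemma face_boundary_edge_subset_vertices:
  assumes "simple_graph V E" "plane_embedding V E pos \<gamma>" "e \<in> face_boundary_edges E \<gamma> F"
  shows "e \<subseteq> face_boundary_vertices V pos F"
proof
  fix v assume "v \<in> e"
  moreover have "e \<in> E" "path_image (\<gamma> e) \<subseteq> frontier F"
    using assms(3) by (auto simp: face_boundary_edges_def)
  ultimately have "v \<in> V" "pos v \<in> frontier F"
    using plane_embedding_endpoints[OF assms(2)] simple_graph_edge_subset[OF assms(1)] by blast+
  then show "v \<in> face_boundary_vertices V pos F" by (simp add: face_boundary_vertices_def)
qed

lemma drawing_remove_edge_meets_ends:
  assumes pe: "plane_embedding V E pos \<gamma>" and e: "e \<in> E"
  shows "drawing V (E - {e}) pos \<gamma> \<inter> path_image (\<gamma> e) \<subseteq> {pathstart (\<gamma> e), pathfinish (\<gamma> e)}"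
proof
  fix x assume x: "x \<in> drawing V (E - {e}) pos \<gamma> \<inter> path_image (\<gamma> e)"
  have "x \<in> pos ` e"
  proof (cases "x \<in> pos ` V")
    case True
    have "path_image (\<gamma> e) \<inter> pos ` V = pos ` e" using pe e by (simp add: plane_embedding_def)
    then show ?thesis using True x by blast
  next
    case False
    then obtain e' where "e' \<in> E" "e' \<noteq> e" "x \<in> path_image (\<gamma> e')"
      using x by (auto simp: drawing_def)
    then have "x \<in> pos ` (e' \<inter> e)" using pe e x unfolding plane_embedding_def by blast
    then show ?thesis by blast
  qed
  then show "x \<in> {pathstart (\<gamma> e), pathfinish (\<gamma> e)}"
    using pe e by (simp add: plane_embedding_def)
qed

lemma edge_subset_frontier_outer_face:
  assumes sg: "simple_graph V E" and pe: "plane_embedding V E pos \<gamma>" and e: "e \<in> E"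
    and t: "0 < t" "t < 1" "\<gamma> e t \<in> closure (outer_face (drawing V E pos \<gamma>))"
  shows "path_image (\<gamma> e) \<subseteq> frontier (outer_face (drawing V E pos \<gamma>))"
proof -
  define D where "D = drawing V E pos \<gamma>"
  define K where "K = drawing V (E - {e}) pos \<gamma>"
  have clD: "closed D" using simple_plane_drawing_closed[OF sg pe] by (simp add: D_def)
  have DK: "D = K \<union> path_image (\<gamma> e)"
    using e by (auto simp: D_def K_def drawing_def)
  have KP: "K \<inter> path_image (\<gamma> e) \<subseteq> {pathstart (\<gamma> e), pathfinish (\<gamma> e)}"
    unfolding K_def by (rule drawing_remove_edge_meets_ends[OF pe e])
  have "closed K" unfolding K_def
    by (rule simple_plane_drawing_closed)
       (use simple_graph_subset[OF sg] plane_embedding_subset[OF pe] in auto)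
  moreover have "arc (\<gamma> e)" using pe e by (simp add: plane_embedding_def)
  moreover have "frontier (outer_face D) \<subseteq> K \<union> path_image (\<gamma> e)"
    using frontier_outer_face_subset[OF clD] DK by simp
  moreover have "outer_face D \<inter> (K \<union> path_image (\<gamma> e)) = {}"
    using outer_face_disjoint[of D] DK by simp
  moreover have "\<gamma> e t \<in> closure (outer_face D)" using t by (simp add: D_def)
  ultimately have "path_image (\<gamma> e) \<subseteq> closure (outer_face D)"
    using arc_subset_closure[OF _ _ KP _ _ t(1,2)] by blast
  moreover have "path_image (\<gamma> e) \<inter> outer_face D = {}"
    using outer_face_disjoint[of D] DK by auto
  ultimately have "path_image (\<gamma> e) \<subseteq> frontier (outer_face D)"
    using interior_open[OF outer_face_open[OF clD]] unfolding frontier_def by blast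
  then show ?thesis by (simp add: D_def)
qed

lemma drawing_avoiding_vertex:
  assumes sg: "simple_graph V E" and pe: "plane_embedding V E pos \<gamma>" and u: "u \<in> V"
  shows "closed (drawing (V - {u}) {e\<in>E. u \<notin> e} pos \<gamma>)"
    and "pos u \<notin> drawing (V - {u}) {e\<in>E. u \<notin> e} pos \<gamma>"
proof -
  have inj: "inj_on pos V" and arcs: "\<And>e. e \<in> E \<Longrightarrow> arc (\<gamma> e)"
    and vertices_on: "\<And>e. e \<in> E \<Longrightarrow> path_image (\<gamma> e) \<inter> pos ` V = pos ` e"
    using pe by (auto simp: plane_embedding_def)
  show "closed (drawing (V - {u}) {e\<in>E. u \<notin> e} pos \<gamma>)"
    using sg simple_graph_finite_edges[OF sg] arcs
    by (intro drawing_closed) (auto simp: simple_graph_def arc_imp_path)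
  show "pos u \<notin> drawing (V - {u}) {e\<in>E. u \<notin> e} pos \<gamma>"
  proof
    assume "pos u \<in> drawing (V - {u}) {e\<in>E. u \<notin> e} pos \<gamma>"
    then consider v where "v \<in> V" "v \<noteq> u" "pos v = pos u"
      | e where "e \<in> E" "u \<notin> e" "pos u \<in> path_image (\<gamma> e)"
      unfolding drawing_def by (auto simp: image_iff) metis
    then show False
    proof cases
      case 1
      then show False using inj u by (metis inj_onD)
    next
      case 2
      then have "pos u \<in> pos ` e" using vertices_on[of e] u by blast
      then show False
        using inj u simple_graph_edge_subset[OF sg 2(1)] 2(2) by (metis imageE inj_onD subsetD)
    qed
  qed
qed

lemma outer_frontier_vertex_boundary_edge:
  assumes sg: "simple_graph V E" and pe: "plane_embedding V E pos \<gamma>"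
    and e0: "e0 \<in> E" "u \<in> e0"
    and fr: "pos u \<in> frontier (outer_face (drawing V E pos \<gamma>))"
  shows "\<exists>e\<in>face_boundary_edges E \<gamma> (outer_face (drawing V E pos \<gamma>)). u \<in> e"
proof -
  define D where "D = drawing V E pos \<gamma>"
  define K where "K = drawing (V - {u}) {e\<in>E. u \<notin> e} pos \<gamma>"
  have clD: "closed D" using simple_plane_drawing_closed[OF sg pe] by (simp add: D_def)
  have arcs: "\<And>e. e \<in> E \<Longrightarrow> arc (\<gamma> e)" using pe by (simp add: plane_embedding_def)
  have eV: "\<And>e. e \<in> E \<Longrightarrow> e \<subseteq> V" using simple_graph_edge_subset[OF sg] .
  have uV: "u \<in> V" using eV e0 by blast
  have "closed K" "pos u \<notin> K"
    using drawing_avoiding_vertex[OF sg pe uV] by (simp_all add: K_def)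
  then obtain \<epsilon> where \<epsilon>: "\<epsilon> > 0" "ball (pos u) \<epsilon> \<inter> K = {}"
    using open_contains_ball[of "- K"] by (force simp: open_Compl)
  obtain x where x: "e0 = {u, x}" "x \<noteq> u" using simple_graph_edge_other_end[OF sg e0] .
  then have "pos x \<in> K" using eV e0 by (auto simp: K_def drawing_def)
  then have "\<epsilon> \<le> dist (pos u) (pos x)" using \<epsilon>(2) by (auto simp: not_less[symmetric])
  moreover have "path_image (\<gamma> e0) \<inter> outer_face D = {}"
    using outer_face_disjoint[of D] e0 by (auto simp: D_def drawing_def)
  ultimately obtain z where z: "z \<in> frontier (outer_face D)" "0 < dist (pos u) z" "dist (pos u) z < \<epsilon>"
    using frontier_point_near[of "pos u" "outer_face D" "path_image (\<gamma> e0)" "pos x" \<epsilon>]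
      fr arcs[OF e0(1)] plane_embedding_endpoints[OF pe e0(1)] e0 x \<epsilon>(1)
    by (auto simp: D_def arc_imp_path connected_path_image)
  then have "z \<in> D" "z \<notin> K" "z \<noteq> pos u"
    using frontier_outer_face_subset[OF clD] \<epsilon>(2) by auto
  then have "z \<notin> pos ` V" and "\<exists>e\<in>E. u \<in> e \<and> z \<in> path_image (\<gamma> e)"
    by (auto simp: D_def K_def drawing_def)
  then obtain e t where e: "e \<in> E" "u \<in> e" and t: "t \<in> {0..1}" "z = \<gamma> e t"
    by (auto simp: path_image_def)
  have "{\<gamma> e 0, \<gamma> e 1} = pos ` e"
    using pe e(1) by (simp add: plane_embedding_def pathstart_def pathfinish_def)
  then have "\<gamma> e 0 \<in> pos ` V" "\<gamma> e 1 \<in> pos ` V" using eV[OF e(1)] by blast+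
  then have "0 < t" "t < 1" using \<open>z \<notin> pos ` V\<close> t by (auto simp: less_le)
  moreover have "z \<in> closure (outer_face D)" using z(1) by (simp add: frontier_def)
  ultimately have "path_image (\<gamma> e) \<subseteq> frontier (outer_face D)"
    using edge_subset_frontier_outer_face[OF sg pe e(1)] t by (simp add: D_def)
  then show ?thesis using e by (auto simp: face_boundary_edges_def D_def)
qed

lemma outer_boundary_edge_after_deletion:
  assumes sg: "simple_graph V E" and kc: "k_connected k V E" "2 \<le> k"
    and pe: "plane_embedding V E pos \<gamma>" and uw: "{u, w} \<in> E"
    and fr: "pos u \<in> frontier (outer_face (drawing V E pos \<gamma>))"
  shows "\<exists>e\<in>face_boundary_edges (E - {{u, w}}) \<gamma> (outer_face (drawing V (E - {{u, w}}) pos \<gamma>)). u \<in> e"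
proof -
  have sg': "simple_graph V (E - {{u, w}})" and pe': "plane_embedding V (E - {{u, w}}) pos \<gamma>"
    using simple_graph_subset[OF sg] plane_embedding_subset[OF pe] by auto
  have "u \<in> V" "w \<in> V" using simple_graph_edge_subset[OF sg uw] by auto
  moreover have "u \<noteq> w"
  proof
    assume "u = w"
    then obtain x where "{u} = {u, x}" "x \<noteq> u" using simple_graph_edge_other_end[OF sg uw] by auto
    then show False by auto
  qed
  ultimately obtain y where y: "{u, y} \<in> E" "y \<noteq> w"
    using k_connected_other_neighbour[OF kc] by blast
  then have "{u, y} \<in> E - {{u, w}}" by (auto simp: doubleton_eq_iff)
  moreover have "pos u \<in> frontier (outer_face (drawing V (E - {{u, w}}) pos \<gamma>))"
    using frontier_outer_face_antimono[OF _ simple_plane_drawing_closed[OF sg' pe'] _ fr] \<open>u \<in> V\<close>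
    by (auto simp: drawing_def)
  ultimately show ?thesis by (rule outer_frontier_vertex_boundary_edge[OF sg' pe' _ insertI1])
qed

theorem claim2:
  fixes V :: "'a set" and E :: "'a set set" and pos :: "'a \<Rightarrow> complex"
    and \<gamma> :: "'a set \<Rightarrow> real \<Rightarrow> complex" and r0 r1 :: 'a
  assumes "simple_graph V E" and "k_connected 3 V E" and "card V \<ge> 4"
    and "plane_embedding V E pos \<gamma>"
    and "r0 \<in> V" and "r1 \<in> V" and "{r0, r1} \<in> E"
    and "pos r0 \<in> frontier (outer_face (drawing V E pos \<gamma>))"
    and "pos r1 \<in> frontier (outer_face (drawing V E pos \<gamma>))"
  shows "\<forall>VB EB.
    is_bridge V (E - {{r0, r1}})
      (face_boundary_vertices V pos (outer_face (drawing V (E - {{r0, r1}}) pos \<gamma>)))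
      (face_boundary_edges (E - {{r0, r1}}) \<gamma> (outer_face (drawing V (E - {{r0, r1}}) pos \<gamma>)))
      VB EB
    \<and> \<not> trivial_bridge
      (face_boundary_vertices V pos (outer_face (drawing V (E - {{r0, r1}}) pos \<gamma>)))
      (face_boundary_edges (E - {{r0, r1}}) \<gamma> (outer_face (drawing V (E - {{r0, r1}}) pos \<gamma>)))
      VB EB
    \<longrightarrow> card (attachments V (E - {{r0, r1}}) VB EB) \<ge> 3"
proof (intro allI impI, elim conjE)
  \<comment> \<open>card V \<ge> 4, r0 \<in> V and r1 \<in> V follow from the other hypotheses.\<close>
  note sg = assms(1) and kc = assms(2) and pe = assms(4) and r = assms(7)
  let ?E' = "E - {{r0, r1}}"
  let ?U = "outer_face (drawing V ?E' pos \<gamma>)"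
  fix VB EB
  assume br: "is_bridge V ?E' (face_boundary_vertices V pos ?U) (face_boundary_edges ?E' \<gamma> ?U) VB EB"
    and nt: "\<not> trivial_bridge (face_boundary_vertices V pos ?U) (face_boundary_edges ?E' \<gamma> ?U) VB EB"
  obtain e0 where e0: "e0 \<in> face_boundary_edges ?E' \<gamma> ?U" "r0 \<in> e0"
    using outer_boundary_edge_after_deletion[OF sg kc _ pe r assms(8)] by auto
  have "{r1, r0} = {r0, r1}" by blast
  then obtain e1 where e1: "e1 \<in> face_boundary_edges ?E' \<gamma> ?U" "r1 \<in> e1"
    using outer_boundary_edge_after_deletion[OF sg kc _ pe _ assms(9), of r0] r by auto
  have "simple_graph V ?E'" "plane_embedding V ?E' pos \<gamma>"
    using simple_graph_subset[OF sg] plane_embedding_subset[OF pe] by auto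
  then have "\<forall>e\<in>face_boundary_edges ?E' \<gamma> ?U. e \<subseteq> face_boundary_vertices V pos ?U"
    using face_boundary_edge_subset_vertices by blast
  moreover have "face_boundary_edges ?E' \<gamma> ?U \<subseteq> ?E'" by (auto simp: face_boundary_edges_def)
  ultimately show "card (attachments V ?E' VB EB) \<ge> 3"
    using nontrivial_bridge_three_attachments[OF sg kc r br nt _ _ e0 e1] by blast
qed

end
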